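(* Let $H$ be a digraph and $\delta>0$. If $2a_S\ge|S|$ for all $S\in\mathcal S_H$, then $G(H,\delta)$ is obtained when $y_1=1$. Similarly, if $2b_S\ge|S|$ for all $S\in\mathcal S_H$, then $G(H,\delta)$ is obtained when $y_2=1$.
   Context: A digraph has no self-loops and at most one directed edge per ordered pair; degree = in-degree + out-degree; $\Delta$ is the maximum degree of $H$. $H^*$ is the induced subgraph on vertices of degree $\Delta$; $\mathcal S_H$ is the collection of independent sets of $H^*$ (including $\emptyset$). For $S\in\mathcal S_H$ let $T=\mathsf N(S)$ be the vertices outside $S$ adjacent in either direction to $S$, $\mathsf E(S,T)$ and $\mathsf E(T,S)$ the sets of edges from $S$ to $T$ and from $T$ to $S$, and $F_S$ the bipartite digraph on $S\cup T$ with edges $\mathsf E(S,T)\cup\mathsf E(T,S)$. A maximum fractional matching of $F_S$ is $w:\mathsf E(F_S)\to[0,1]$ with $\sum_{e\ni v}w(e)\le1$ for all vertices and equality for $v\in S$; $a_S=\max_w\sum_{e\in\mathsf E(S,T)}w(e)$, $b_S=\max_w\sum_{e\in\mathsf E(T,S)}w(e)$ over such $w$. $\mathsf v^+(S),\mathsf v^-(S),\mathsf v^{\pm}(S)$ count vertices of $S$ with no in-neighbours, no out-neighbours, and both, in $H$. \[ g_H(x_1,x_2,y_1,y_2)=\sum_{S\in\mathcal S_H}x_1^{\mathsf v^+(S)}x_2^{\mathsf v^-(S)}(x_1\wedge x_2)^{\mathsf v^{\pm}(S)}y_1^{a_S}y_2^{b_S}, \] \[ G(H,\delta)=\inf_{x_1,x_2\ge0,\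 0\le y_1,y_2\le1}\{x_1y_1+x_2y_2:g_H(x_1,x_2,y_1,y_2)=1+\delta\}. \] "Obtained when $y_1=1$" means restricting the infimum to $y_1=1$ does not change its value (similarly for $y_2$). *)

theory Defs
  imports Complex_Main "HOL-Library.Extended_Real"
begin

definition digraph :: "'a set \<Rightarrow> ('a \<times> 'a) set \<Rightarrow> bool" where
  "digraph V E \<longleftrightarrow> finite V \<and> E \<subseteq> V \<times> V \<and> (\<forall>v. (v, v) \<notin> E)"

definition deg :: "('a \<times> 'a) set \<Rightarrow> 'a \<Rightarrow> nat" where
  "deg E v = card {u. (v, u) \<in> E} + card {u. (u, v) \<in> E}"

definition maxdeg :: "'a set \<Rightarrow> ('a \<times> 'a) set \<Rightarrow> nat" where
  "maxdeg V E = Max (deg E ` V)"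

definition Hstar :: "'a set \<Rightarrow> ('a \<times> 'a) set \<Rightarrow> 'a set" where
  "Hstar V E = {v \<in> V. deg E v = maxdeg V E}"

text \<open>\<S>_H: independent sets of the induced subgraph H* (including the empty set).\<close>
definition indep_sets :: "'a set \<Rightarrow> ('a \<times> 'a) set \<Rightarrow> 'a set set" where
  "indep_sets V E = {S. S \<subseteq> Hstar V E \<and> (\<forall>u\<in>S. \<forall>v\<in>S. (u, v) \<notin> E)}"

definition nbhd :: "'a set \<Rightarrow> ('a \<times> 'a) set \<Rightarrow> 'a set \<Rightarrow> 'a set" where
  "nbhd V E S = {v \<in> V - S. \<exists>u\<in>S. (u, v) \<in> E \<or> (v, u) \<in> E}"

definition edges_from_to :: "('a \<times> 'a) set \<Rightarrow> 'a set \<Rightarrow> 'a set \<Rightarrow> ('a \<times> 'a) set" where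
  "edges_from_to E A B = {e \<in> E. fst e \<in> A \<and> snd e \<in> B}"

definition FS_edges :: "'a set \<Rightarrow> ('a \<times> 'a) set \<Rightarrow> 'a set \<Rightarrow> ('a \<times> 'a) set" where
  "FS_edges V E S = edges_from_to E S (nbhd V E S) \<union> edges_from_to E (nbhd V E S) S"

text \<open>Maximum fractional matching of F_S in the sense of the paper: weights in [0,1] on the
  edges of F_S, total weight at most 1 at every vertex of F_S, exactly 1 at every vertex of S.
  (Values of w outside the edges of F_S are irrelevant.)\<close>
definition max_frac_matching ::
    "'a set \<Rightarrow> ('a \<times> 'a) set \<Rightarrow> 'a set \<Rightarrow> ('a \<times> 'a \<Rightarrow> real) \<Rightarrow> bool" where
  "max_frac_matching V E S w \<longleftrightarrow>
     (\<forall>e\<in>FS_edges V E S. 0 \<le> w e \<and> w e \<le> 1) \<and>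
     (\<forall>v\<in>S \<union> nbhd V E S. (\<Sum>e\<in>{e\<in>FS_edges V E S. fst e = v \<or> snd e = v}. w e) \<le> 1) \<and>
     (\<forall>v\<in>S. (\<Sum>e\<in>{e\<in>FS_edges V E S. fst e = v \<or> snd e = v}. w e) = 1)"

text \<open>a_S and b_S (maximum over such w; convention 0 if no such w exists, which can only
  happen in the degenerate edgeless case).\<close>
definition aS :: "'a set \<Rightarrow> ('a \<times> 'a) set \<Rightarrow> 'a set \<Rightarrow> real" where
  "aS V E S = (if {w. max_frac_matching V E S w} = {} then 0
     else Sup ((\<lambda>w. \<Sum>e\<in>edges_from_to E S (nbhd V E S). w e) ` {w. max_frac_matching V E S w}))"

definition bS :: "'a set \<Rightarrow> ('a \<times> 'a) set \<Rightarrow> 'a set \<Rightarrow> real" where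
  "bS V E S = (if {w. max_frac_matching V E S w} = {} then 0
     else Sup ((\<lambda>w. \<Sum>e\<in>edges_from_to E (nbhd V E S) S. w e) ` {w. max_frac_matching V E S w}))"

definition vplus :: "('a \<times> 'a) set \<Rightarrow> 'a set \<Rightarrow> nat" where
  "vplus E S = card {v\<in>S. \<not> (\<exists>u. (u, v) \<in> E)}"

definition vminus :: "('a \<times> 'a) set \<Rightarrow> 'a set \<Rightarrow> nat" where
  "vminus E S = card {v\<in>S. \<not> (\<exists>u. (v, u) \<in> E)}"

definition vpm :: "('a \<times> 'a) set \<Rightarrow> 'a set \<Rightarrow> nat" where
  "vpm E S = card {v\<in>S. (\<exists>u. (u, v) \<in> E) \<and> (\<exists>u. (v, u) \<in> E)}"

text \<open>Real power with the convention y^0 = 1 (also for y = 0).\<close>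
definition rpow :: "real \<Rightarrow> real \<Rightarrow> real" where
  "rpow y a = (if a = 0 then 1 else y powr a)"

definition gH :: "'a set \<Rightarrow> ('a \<times> 'a) set \<Rightarrow> real \<Rightarrow> real \<Rightarrow> real \<Rightarrow> real \<Rightarrow> real" where
  "gH V E x1 x2 y1 y2 =
     (\<Sum>S\<in>indep_sets V E. x1 ^ vplus E S * x2 ^ vminus E S * (min x1 x2) ^ vpm E S
                          * rpow y1 (aS V E S) * rpow y2 (bS V E S))"

definition G_feasible :: "'a set \<Rightarrow> ('a \<times> 'a) set \<Rightarrow> real \<Rightarrow> real \<Rightarrow> real \<Rightarrow> real \<Rightarrow> real \<Rightarrow> bool" where
  "G_feasible V E \<delta> x1 x2 y1 y2 \<longleftrightarrow>
     0 \<le> x1 \<and> 0 \<le> x2 \<and> 0 \<le> y1 \<and> y1 \<le> 1 \<and> 0 \<le> y2 \<and> y2 \<le> 1 \<and>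
     gH V E x1 x2 y1 y2 = 1 + \<delta>"

text \<open>G(H,\<delta>) as an infimum in the extended reals (empty infimum = \<infinity>).\<close>
definition GH :: "'a set \<Rightarrow> ('a \<times> 'a) set \<Rightarrow> real \<Rightarrow> ereal" where
  "GH V E \<delta> = Inf {ereal (x1 * y1 + x2 * y2) | x1 x2 y1 y2. G_feasible V E \<delta> x1 x2 y1 y2}"

end

theory Submission
  imports Defs
begin

(* Under 2 a_S >= |S| every vertex of H* has an out-neighbour (apply the hypothesis to
   singletons), so v^-(S) = 0 and v^+(S) + v^pm(S) = |S|; a fractional matching w of F_S then
   yields v^+(S) <= a_S, 0 <= b_S <= v^pm(S) and a_S + b_S >= |S|.  Put u = x1 y1, v = x2 y2.
   These exponent bounds together with AM-GM show that no term of g_H decreases when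
   (x1, x2, y1, y2) is replaced by (X, X, 1, Y), where (X, Y) = (u, v/u) if v <= u and
   ((u + v)/2, 1) otherwise; this point has the same objective X + X Y = u + v.  As
   g_H(0, 0, y1, y2) = 1, shrinking X continuously reaches g_H = 1 + delta without increasing
   the objective.  The second statement is the first one for the reversed digraph. *)

(* Unlike powr, rpow has 0^0 = 1, so it obeys the exponent laws on all nonnegative bases. *)

lemma rpow_nonneg: "0 \<le> y \<Longrightarrow> 0 \<le> rpow y a"
  by (simp add: rpow_def)

lemma rpow_one_base [simp]: "rpow 1 a = 1"
  by (simp add: rpow_def)

lemma rpow_zero_exp [simp]: "rpow y 0 = 1"
  by (simp add: rpow_def)

lemma rpow_of_nat: "0 \<le> x \<Longrightarrow> rpow x (real n) = x ^ n"
  by (cases "x = 0") (auto simp: rpow_def powr_realpow)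

lemma rpow_add: "0 \<le> x \<Longrightarrow> 0 \<le> a \<Longrightarrow> 0 \<le> b \<Longrightarrow> rpow x (a + b) = rpow x a * rpow x b"
  by (cases "x = 0") (auto simp: rpow_def powr_add)

lemma rpow_mult_base: "0 \<le> x \<Longrightarrow> 0 \<le> y \<Longrightarrow> rpow (x * y) a = rpow x a * rpow y a"
  by (simp add: rpow_def powr_mult)

lemma rpow_rpow: "0 \<le> x \<Longrightarrow> rpow (rpow x a) b = rpow x (a * b)"
  by (cases "x = 0") (auto simp: rpow_def powr_powr)

lemma rpow_mono_base: "0 \<le> x \<Longrightarrow> x \<le> y \<Longrightarrow> 0 \<le> a \<Longrightarrow> rpow x a \<le> rpow y a"
  by (simp add: rpow_def powr_mono2)

lemma rpow_antimono_exp: "0 \<le> y \<Longrightarrow> y \<le> 1 \<Longrightarrow> 0 \<le> a \<Longrightarrow> a \<le> b \<Longrightarrow> rpow y b \<le> rpow y a"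
  by (cases "y = 0") (auto simp: rpow_def powr_mono' powr_le1)

lemma rpow_divide_mult: "0 \<le> v \<Longrightarrow> v \<le> u \<Longrightarrow> rpow (v / u) b * rpow u b = rpow v b"
  by (cases "u = 0") (auto simp: rpow_def powr_divide)

lemma monomial_le_rpow_split:
  fixes x1 x2 y1 y2 a b c :: real and p q :: nat
  assumes "0 \<le> x1" "0 \<le> x2" "0 \<le> y1" "y1 \<le> 1" "0 \<le> y2" "y2 \<le> 1"
    and "p \<le> c" "c \<le> p + q" "c \<le> a" "p + q - c \<le> b"
  shows "x1 ^ p * min x1 x2 ^ q * rpow y1 a * rpow y2 b
         \<le> rpow (x1 * y1) c * rpow (x2 * y2) (p + q - c)"
proof -
  let ?m = "min x1 x2" and ?d = "real (p + q) - c"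
  have "?m ^ q = rpow ?m (c - p) * rpow ?m ?d"
    using assms by (simp flip: rpow_of_nat rpow_add)
  also have "\<dots> \<le> rpow x1 (c - p) * rpow x2 ?d"
    using assms by (intro mult_mono rpow_mono_base) (auto simp: rpow_nonneg)
  finally have m: "?m ^ q \<le> rpow x1 (c - p) * rpow x2 ?d" .
  have "x1 ^ p * ?m ^ q * rpow y1 a * rpow y2 b
        \<le> rpow x1 p * (rpow x1 (c - p) * rpow x2 ?d) * rpow y1 c * rpow y2 ?d"
    using assms m
    by (intro mult_mono rpow_antimono_exp) (auto simp: rpow_of_nat rpow_nonneg)
  also have "\<dots> = (rpow x1 p * rpow x1 (c - p) * rpow y1 c) * (rpow x2 ?d * rpow y2 ?d)"
    by (simp add: mult_ac)
  also have "\<dots> = rpow (x1 * y1) c * rpow (x2 * y2) ?d"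
    using assms rpow_add[of x1 p "c - p"] by (simp add: rpow_mult_base)
  finally show ?thesis by simp
qed

lemma rpow_split_le_power_mean:
  fixes u v c :: real and n :: nat
  assumes "0 \<le> u" "u \<le> v" "n \<le> 2 * c" "c \<le> n"
  shows "rpow u c * rpow v (n - c) \<le> ((u + v) / 2) ^ n"
proof -
  let ?h = "real n / 2"
  have "rpow u c * rpow v (n - c) = rpow u ?h * rpow u (c - ?h) * rpow v (n - c)"
    using assms by (simp flip: rpow_add)
  also have "\<dots> \<le> rpow u ?h * rpow v (c - ?h) * rpow v (n - c)"
    using assms by (intro mult_mono rpow_mono_base) (auto simp: rpow_nonneg)
  also have "\<dots> = rpow (u * v) ?h"
    using assms by (simp add: mult.assoc rpow_mult_base flip: rpow_add)
  also have "\<dots> \<le> rpow (rpow ((u + v) / 2) 2) ?h"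
  proof (rule rpow_mono_base)
    have "0 \<le> (u - v) ^ 2" by simp
    then show "u * v \<le> rpow ((u + v) / 2) 2"
      using assms rpow_of_nat[of "(u + v) / 2" 2] by (simp add: power2_eq_square algebra_simps)
  qed (use assms in auto)
  also have "\<dots> = ((u + v) / 2) ^ n"
    using assms by (simp add: rpow_rpow flip: rpow_of_nat)
  finally show ?thesis .
qed

definition balanced_x :: "real \<Rightarrow> real \<Rightarrow> real" where
  "balanced_x u v = (if v \<le> u then u else (u + v) / 2)"

definition balanced_y :: "real \<Rightarrow> real \<Rightarrow> real" where
  "balanced_y u v = (if v \<le> u then v / u else 1)"

lemma balanced_x_nonneg: "0 \<le> u \<Longrightarrow> 0 \<le> v \<Longrightarrow> 0 \<le> balanced_x u v"
  by (simp add: balanced_x_def)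

lemma balanced_y_bounds: "0 \<le> u \<Longrightarrow> 0 \<le> v \<Longrightarrow> 0 \<le> balanced_y u v \<and> balanced_y u v \<le> 1"
  by (auto simp: balanced_y_def divide_le_eq_1)

lemma balanced_objective:
  "0 \<le> u \<Longrightarrow> 0 \<le> v \<Longrightarrow> balanced_x u v + balanced_x u v * balanced_y u v = u + v"
  unfolding balanced_x_def balanced_y_def by (cases "u = 0") (auto simp: field_simps)

lemma monomial_le_balanced:
  fixes x1 x2 y1 y2 a b :: real and p q :: nat
  defines "u \<equiv> x1 * y1" and "v \<equiv> x2 * y2"
  assumes "0 \<le> x1" "0 \<le> x2" "0 \<le> y1" "y1 \<le> 1" "0 \<le> y2" "y2 \<le> 1"
    and "p \<le> a" "0 \<le> b" "b \<le> q" "p + q \<le> a + b" "p + q \<le> 2 * a"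
  shows "x1 ^ p * min x1 x2 ^ q * rpow y1 a * rpow y2 b
         \<le> balanced_x u v ^ (p + q) * rpow (balanced_y u v) b"
proof (cases "v \<le> u")
  case True
  have "x1 ^ p * min x1 x2 ^ q * rpow y1 a * rpow y2 b \<le> rpow u (p + q - b) * rpow v b"
    using monomial_le_rpow_split[where c = "p + q - b" and p = p and q = q] assms
    by (simp add: u_def v_def)
  also have "\<dots> = rpow u (p + q - b) * rpow u b * rpow (v / u) b"
    using True assms rpow_divide_mult[of v u b] by (simp add: v_def mult_ac)
  also have "\<dots> = u ^ (p + q) * rpow (v / u) b"
    using assms by (simp add: u_def flip: rpow_add rpow_of_nat)
  finally show ?thesis
    using True by (simp add: balanced_x_def balanced_y_def)
next
  case False
  let ?c = "min a (p + q)"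
  have "x1 ^ p * min x1 x2 ^ q * rpow y1 a * rpow y2 b \<le> rpow u ?c * rpow v (p + q - ?c)"
    unfolding u_def v_def using assms by (intro monomial_le_rpow_split) auto
  also have "\<dots> \<le> ((u + v) / 2) ^ (p + q)"
    using False assms by (intro rpow_split_le_power_mean) (auto simp: u_def min_def)
  finally show ?thesis
    using False by (simp add: balanced_x_def balanced_y_def)
qed

lemma le_Sup_image_or_zero:
  fixes f :: "'b \<Rightarrow> real"
  assumes "w \<in> M" and "\<And>w. w \<in> M \<Longrightarrow> f w \<le> c"
  shows "f w \<le> (if M = {} then 0 else Sup (f ` M))"
  using assms by (auto intro!: cSup_upper bdd_aboveI2)

lemma Sup_image_or_zero_le:
  fixes f :: "'b \<Rightarrow> real"
  assumes "\<And>w. w \<in> M \<Longrightarrow> f w \<le> c" and "0 \<le> c"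
  shows "(if M = {} then 0 else Sup (f ` M)) \<le> c"
  using assms by (auto intro!: cSup_least)

lemma finite_edges_from_to: "digraph V E \<Longrightarrow> finite (edges_from_to E A B)"
  by (rule finite_subset[of _ "V \<times> V"]) (auto simp: digraph_def edges_from_to_def)

context
  fixes V :: "'a set" and E :: "('a \<times> 'a) set" and S :: "'a set"
  assumes digraph: "digraph V E" and S_subset: "S \<subseteq> V"
begin

definition out_weight :: "('a \<times> 'a \<Rightarrow> real) \<Rightarrow> 'a \<Rightarrow> real" where
  "out_weight w v = sum w {e \<in> edges_from_to E S (nbhd V E S). fst e = v}"

definition in_weight :: "('a \<times> 'a \<Rightarrow> real) \<Rightarrow> 'a \<Rightarrow> real" where
  "in_weight w v = sum w {e \<in> edges_from_to E (nbhd V E S) S. snd e = v}"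

lemma finite_S: "finite S"
  using digraph S_subset by (auto simp: digraph_def intro: finite_subset)

lemma sum_incident_eq_out_add_in_weight:
  assumes "v \<in> S"
  shows "(\<Sum>e\<in>{e \<in> FS_edges V E S. fst e = v \<or> snd e = v}. w e)
         = out_weight w v + in_weight w v"
proof -
  let ?Out = "{e \<in> edges_from_to E S (nbhd V E S). fst e = v}"
    and ?In = "{e \<in> edges_from_to E (nbhd V E S) S. snd e = v}"
  have "{e \<in> FS_edges V E S. fst e = v \<or> snd e = v} = ?Out \<union> ?In"
    using assms by (auto simp: FS_edges_def edges_from_to_def nbhd_def)
  moreover have "?Out \<inter> ?In = {}"
    by (auto simp: edges_from_to_def nbhd_def)
  ultimately show ?thesis
    unfolding out_weight_def in_weight_def
    by (simp add: sum.union_disjoint finite_edges_from_to[OF digraph])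
qed

lemma sum_out_edges_eq_sum_out_weight:
  "sum w (edges_from_to E S (nbhd V E S)) = (\<Sum>v\<in>S. out_weight w v)"
  unfolding out_weight_def
  by (rule sum.group[symmetric])
    (use finite_S finite_edges_from_to[OF digraph] in \<open>auto simp: edges_from_to_def\<close>)

lemma sum_in_edges_eq_sum_in_weight:
  "sum w (edges_from_to E (nbhd V E S) S) = (\<Sum>v\<in>S. in_weight w v)"
  unfolding in_weight_def
  by (rule sum.group[symmetric])
    (use finite_S finite_edges_from_to[OF digraph] in \<open>auto simp: edges_from_to_def\<close>)

lemma in_weight_eq_0_if_no_in_neighbour: "\<nexists>u. (u, v) \<in> E \<Longrightarrow> in_weight w v = 0"
  unfolding in_weight_def edges_from_to_def by (rule sum.neutral) auto

context
  fixes w assumes matching: "max_frac_matching V E S w"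
begin

lemma out_weight_nonneg: "0 \<le> out_weight w v"
  using matching unfolding out_weight_def max_frac_matching_def FS_edges_def
  by (auto intro: sum_nonneg)

lemma in_weight_nonneg: "0 \<le> in_weight w v"
  using matching unfolding in_weight_def max_frac_matching_def FS_edges_def
  by (auto intro: sum_nonneg)

lemma out_add_in_weight: "v \<in> S \<Longrightarrow> out_weight w v + in_weight w v = 1"
  using matching by (simp add: max_frac_matching_def flip: sum_incident_eq_out_add_in_weight)

lemma sum_out_add_sum_in_edges:
  "sum w (edges_from_to E S (nbhd V E S)) + sum w (edges_from_to E (nbhd V E S) S) = card S"
  by (simp add: sum_out_edges_eq_sum_out_weight
      sum_in_edges_eq_sum_in_weight out_add_in_weight flip: sum.distrib)

lemma sum_out_edges_nonneg: "0 \<le> sum w (edges_from_to E S (nbhd V E S))"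
  by (simp add: sum_out_edges_eq_sum_out_weight sum_nonneg out_weight_nonneg)

lemma sum_in_edges_nonneg: "0 \<le> sum w (edges_from_to E (nbhd V E S) S)"
  by (simp add: sum_in_edges_eq_sum_in_weight sum_nonneg in_weight_nonneg)

lemma card_sources_le_sum_out_edges:
  "real (card {v \<in> S. \<nexists>u. (u, v) \<in> E}) \<le> sum w (edges_from_to E S (nbhd V E S))"
proof -
  let ?P = "{v \<in> S. \<nexists>u. (u, v) \<in> E}"
  have "(\<Sum>v\<in>?P. out_weight w v) = (\<Sum>v\<in>?P. 1)"
    using out_add_in_weight in_weight_eq_0_if_no_in_neighbour by (intro sum.cong) force+
  then have "real (card ?P) = (\<Sum>v\<in>?P. out_weight w v)"
    by simp
  also have "\<dots> \<le> (\<Sum>v\<in>S. out_weight w v)"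
    by (rule sum_mono2) (auto simp: finite_S out_weight_nonneg)
  finally show ?thesis
    by (simp add: sum_out_edges_eq_sum_out_weight)
qed

lemma sum_in_edges_le_card_targets:
  "sum w (edges_from_to E (nbhd V E S) S) \<le> real (card {v \<in> S. \<exists>u. (u, v) \<in> E})"
proof -
  let ?P = "{v \<in> S. \<exists>u. (u, v) \<in> E}"
  have "sum w (edges_from_to E (nbhd V E S) S) = (\<Sum>v\<in>?P. in_weight w v)"
    unfolding sum_in_edges_eq_sum_in_weight
    by (rule sum.mono_neutral_right) (auto simp: finite_S in_weight_eq_0_if_no_in_neighbour)
  also have "\<dots> \<le> (\<Sum>v\<in>?P. 1)"
  proof (rule sum_mono)
    fix v assume "v \<in> ?P"
    then show "in_weight w v \<le> 1"
      using out_add_in_weight[of v] out_weight_nonneg[of v] by simp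
  qed
  finally show ?thesis by simp
qed

end

lemma sum_out_edges_le_aS:
  "max_frac_matching V E S w \<Longrightarrow> sum w (edges_from_to E S (nbhd V E S)) \<le> aS V E S"
  unfolding aS_def using sum_out_add_sum_in_edges sum_in_edges_nonneg
  by (intro le_Sup_image_or_zero[where c = "card S"]) fastforce+

lemma sum_in_edges_le_bS:
  "max_frac_matching V E S w \<Longrightarrow> sum w (edges_from_to E (nbhd V E S) S) \<le> bS V E S"
  unfolding bS_def using sum_out_add_sum_in_edges sum_out_edges_nonneg
  by (intro le_Sup_image_or_zero[where c = "card S"]) fastforce+

lemma bS_le_card_targets: "bS V E S \<le> real (card {v \<in> S. \<exists>u. (u, v) \<in> E})"
  unfolding bS_def by (intro Sup_image_or_zero_le sum_in_edges_le_card_targets) auto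

end

lemma aS_eq_0_if_no_out_edges: "edges_from_to E S (nbhd V E S) = {} \<Longrightarrow> aS V E S = 0"
  unfolding aS_def by (auto simp: image_constant_conv)

lemma bS_eq_0_if_no_in_edges: "edges_from_to E (nbhd V E S) S = {} \<Longrightarrow> bS V E S = 0"
  unfolding bS_def by (auto simp: image_constant_conv)

lemma indep_sets_subset: "S \<in> indep_sets V E \<Longrightarrow> S \<subseteq> V"
  by (auto simp: indep_sets_def Hstar_def)

lemma singleton_in_indep_sets:
  "digraph V E \<Longrightarrow> S \<in> indep_sets V E \<Longrightarrow> v \<in> S \<Longrightarrow> {v} \<in> indep_sets V E"
  by (auto simp: indep_sets_def digraph_def)

lemma finite_indep_sets: "digraph V E \<Longrightarrow> finite (indep_sets V E)"
  by (rule finite_subset[of _ "Pow V"]) (auto simp: digraph_def dest: indep_sets_subset)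

lemma vertex_counts_if_no_sinks:
  assumes "finite S" and "\<And>v. v \<in> S \<Longrightarrow> \<exists>u. (v, u) \<in> E"
  shows "vminus E S = 0" and "vplus E S + vpm E S = card S"
proof -
  have "{v \<in> S. \<nexists>u. (v, u) \<in> E} = {}"
    using assms(2) by blast
  then show "vminus E S = 0"
    unfolding vminus_def by (simp only: card.empty)
  have "{v \<in> S. \<nexists>u. (u, v) \<in> E} \<union> {v \<in> S. (\<exists>u. (u, v) \<in> E) \<and> (\<exists>u. (v, u) \<in> E)} = S"
    using assms(2) by auto
  then show "vplus E S + vpm E S = card S"
    unfolding vplus_def vpm_def using assms(1)
    by (metis (no_types, lifting) card_Un_disjoint disjoint_iff finite_Un mem_Collect_eq)
qed

lemma gH_at_origin:
  assumes "digraph V E"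
  shows "gH V E 0 0 y1 y2 = 1"
proof -
  let ?f = "\<lambda>S. (0::real) ^ vplus E S * 0 ^ vminus E S * min 0 0 ^ vpm E S
                 * rpow y1 (aS V E S) * rpow y2 (bS V E S)"
  have "?f S = 0" if S: "S \<in> indep_sets V E - {{}}" for S
  proof -
    obtain v where "v \<in> S" using S by blast
    moreover have "finite S"
      using S finite_S[OF assms indep_sets_subset] by blast
    ultimately have "vplus E S \<noteq> 0 \<or> vminus E S \<noteq> 0 \<or> vpm E S \<noteq> 0"
      unfolding vplus_def vminus_def vpm_def by (auto simp: card_eq_0_iff)
    then show ?thesis by auto
  qed
  moreover have "?f {} = 1"
    by (simp add: vplus_def vminus_def vpm_def aS_eq_0_if_no_out_edges bS_eq_0_if_no_in_edges
        edges_from_to_def)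
  moreover have "{} \<in> indep_sets V E"
    by (simp add: indep_sets_def)
  ultimately show ?thesis
    unfolding gH_def using finite_indep_sets[OF assms]
    by (simp add: sum.remove[of _ "{}"] sum.neutral)
qed

lemma gH_scaling_attains:
  assumes "digraph V E" and "0 \<le> \<delta>" and "1 + \<delta> \<le> gH V E x1 x2 y1 y2"
  shows "\<exists>t. 0 \<le> t \<and> t \<le> 1 \<and> gH V E (t * x1) (t * x2) y1 y2 = 1 + \<delta>"
proof -
  let ?f = "\<lambda>t. gH V E (t * x1) (t * x2) y1 y2"
  have "continuous_on {0..1} ?f"
    unfolding gH_def by (intro continuous_intros)
  moreover have "?f 0 \<le> 1 + \<delta>"
    using assms gH_at_origin[OF assms(1)] by simp
  ultimately show ?thesis
    using assms IVT'[of ?f 0 "1 + \<delta>" 1] by auto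
qed

context
  fixes V :: "'a set" and E :: "('a \<times> 'a) set"
  assumes digraph: "digraph V E"
    and half_out: "\<forall>S\<in>indep_sets V E. 2 * aS V E S \<ge> real (card S)"
begin

lemma out_neighbour_exists:
  assumes "S \<in> indep_sets V E" and "v \<in> S"
  shows "\<exists>u. (v, u) \<in> E"
proof (rule ccontr)
  assume "\<nexists>u. (v, u) \<in> E"
  then have "aS V E {v} = 0"
    by (intro aS_eq_0_if_no_out_edges) (auto simp: edges_from_to_def)
  moreover have "{v} \<in> indep_sets V E"
    using singleton_in_indep_sets[OF digraph assms] .
  ultimately show False
    using half_out by fastforce
qed

lemma max_frac_matching_exists:
  assumes "S \<in> indep_sets V E"
  shows "\<exists>w. max_frac_matching V E S w"
proof (rule ccontr)
  assume none: "\<nexists>w. max_frac_matching V E S w"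
  then have "card S = 0"
    using half_out assms by (fastforce simp: aS_def)
  then have "S = {}"
    using finite_S[OF digraph indep_sets_subset[OF assms]] by simp
  then have "max_frac_matching V E S (\<lambda>_. 0)"
    by (simp add: max_frac_matching_def FS_edges_def edges_from_to_def)
  with none show False by blast
qed

lemma exponent_bounds:
  assumes "S \<in> indep_sets V E"
  shows "vminus E S = 0" and "vplus E S \<le> aS V E S" and "0 \<le> bS V E S"
    and "bS V E S \<le> vpm E S" and "vplus E S + vpm E S \<le> aS V E S + bS V E S"
    and "vplus E S + vpm E S \<le> 2 * aS V E S"
proof -
  have S_V: "S \<subseteq> V"
    using assms by (rule indep_sets_subset)
  note counts = vertex_counts_if_no_sinks[OF finite_S[OF digraph S_V] out_neighbour_exists[OF assms]]
  obtain w where w: "max_frac_matching V E S w"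
    using max_frac_matching_exists[OF assms] by blast
  note matching_facts = digraph S_V w
  show "vminus E S = 0" using counts(1) by simp
  show "vplus E S \<le> aS V E S"
    using card_sources_le_sum_out_edges[OF matching_facts] sum_out_edges_le_aS[OF matching_facts]
    by (simp add: vplus_def)
  show "0 \<le> bS V E S"
    using sum_in_edges_nonneg[OF matching_facts] sum_in_edges_le_bS[OF matching_facts] by linarith
  have "{v \<in> S. \<exists>u. (u, v) \<in> E} = {v \<in> S. (\<exists>u. (u, v) \<in> E) \<and> (\<exists>u. (v, u) \<in> E)}"
    using out_neighbour_exists[OF assms] by blast
  then show "bS V E S \<le> vpm E S"
    using bS_le_card_targets[OF digraph S_V] by (simp add: vpm_def)
  show "vplus E S + vpm E S \<le> aS V E S + bS V E S"
    using sum_out_add_sum_in_edges[OF matching_facts] sum_out_edges_le_aS[OF matching_facts]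
      sum_in_edges_le_bS[OF matching_facts] counts(2) by linarith
  show "vplus E S + vpm E S \<le> 2 * aS V E S"
    using half_out assms counts(2) by fastforce
qed

lemma gH_le_gH_balanced:
  fixes x1 x2 y1 y2 :: real
  defines "X \<equiv> balanced_x (x1 * y1) (x2 * y2)" and "Y \<equiv> balanced_y (x1 * y1) (x2 * y2)"
  assumes "0 \<le> x1" "0 \<le> x2" "0 \<le> y1" "y1 \<le> 1" "0 \<le> y2" "y2 \<le> 1"
  shows "gH V E x1 x2 y1 y2 \<le> gH V E X X 1 Y"
  unfolding gH_def
proof (rule sum_mono)
  fix S assume S: "S \<in> indep_sets V E"
  let ?p = "vplus E S" and ?q = "vpm E S" and ?a = "aS V E S" and ?b = "bS V E S"
  note bounds = exponent_bounds[OF S]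
  have "x1 ^ ?p * x2 ^ vminus E S * min x1 x2 ^ ?q * rpow y1 ?a * rpow y2 ?b
        = x1 ^ ?p * min x1 x2 ^ ?q * rpow y1 ?a * rpow y2 ?b"
    using bounds(1) by simp
  also have "\<dots> \<le> X ^ (?p + ?q) * rpow Y ?b"
    unfolding X_def Y_def using assms bounds(2-6) by (intro monomial_le_balanced) auto
  also have "\<dots> = X ^ ?p * X ^ vminus E S * min X X ^ ?q * rpow 1 ?a * rpow Y ?b"
    using bounds(1) by (simp add: power_add)
  finally show "x1 ^ ?p * x2 ^ vminus E S * min x1 x2 ^ ?q * rpow y1 ?a * rpow y2 ?b
        \<le> X ^ ?p * X ^ vminus E S * min X X ^ ?q * rpow 1 ?a * rpow Y ?b" .
qed

lemma feasible_point_with_y1_eq_1: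
  assumes "G_feasible V E \<delta> x1 x2 y1 y2" and "0 \<le> \<delta>"
  shows "\<exists>x y. G_feasible V E \<delta> x x 1 y \<and> x * 1 + x * y \<le> x1 * y1 + x2 * y2"
proof -
  let ?X = "balanced_x (x1 * y1) (x2 * y2)" and ?Y = "balanced_y (x1 * y1) (x2 * y2)"
  have bounds: "0 \<le> x1" "0 \<le> x2" "0 \<le> y1" "y1 \<le> 1" "0 \<le> y2" "y2 \<le> 1"
    and "gH V E x1 x2 y1 y2 = 1 + \<delta>"
    using assms(1) by (auto simp: G_feasible_def)
  then have "1 + \<delta> \<le> gH V E ?X ?X 1 ?Y"
    using gH_le_gH_balanced by metis
  then obtain t where t: "0 \<le> t" "t \<le> 1" "gH V E (t * ?X) (t * ?X) 1 ?Y = 1 + \<delta>"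
    using gH_scaling_attains[OF digraph assms(2)] by blast
  have X: "0 \<le> ?X" and Y: "0 \<le> ?Y" "?Y \<le> 1"
    using bounds by (simp_all add: balanced_x_nonneg balanced_y_bounds)
  have "G_feasible V E \<delta> (t * ?X) (t * ?X) 1 ?Y"
    using t X Y by (simp add: G_feasible_def)
  moreover have "t * ?X * 1 + t * ?X * ?Y \<le> x1 * y1 + x2 * y2"
  proof -
    have "t * ?X * 1 + t * ?X * ?Y = t * (?X + ?X * ?Y)"
      by (simp add: algebra_simps)
    also have "\<dots> \<le> ?X + ?X * ?Y"
      using t X Y by (intro mult_left_le_one_le) auto
    finally show ?thesis
      using bounds by (simp add: balanced_objective)
  qed
  ultimately show ?thesis by blast
qed

lemma GH_eq_Inf_y1_eq_1:
  assumes "0 \<le> \<delta>"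
  shows "GH V E \<delta> = Inf {ereal (x1 * y1 + x2 * y2) | x1 x2 y1 y2.
                              G_feasible V E \<delta> x1 x2 y1 y2 \<and> y1 = 1}"
  unfolding GH_def
proof (rule antisym)
  show "Inf {ereal (x1 * y1 + x2 * y2) | x1 x2 y1 y2. G_feasible V E \<delta> x1 x2 y1 y2}
        \<le> Inf {ereal (x1 * y1 + x2 * y2) | x1 x2 y1 y2. G_feasible V E \<delta> x1 x2 y1 y2 \<and> y1 = 1}"
    by (rule Inf_superset_mono) blast
  show "Inf {ereal (x1 * y1 + x2 * y2) | x1 x2 y1 y2. G_feasible V E \<delta> x1 x2 y1 y2 \<and> y1 = 1}
        \<le> Inf {ereal (x1 * y1 + x2 * y2) | x1 x2 y1 y2. G_feasible V E \<delta> x1 x2 y1 y2}"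
    using feasible_point_with_y1_eq_1[OF _ assms] by (intro Inf_mono) fastforce
qed

end

lemma sum_swap_image: "sum w (prod.swap ` A) = sum (w \<circ> prod.swap) A"
  by (simp add: sum.reindex)

lemma digraph_converse: "digraph V (E\<inverse>) \<longleftrightarrow> digraph V E"
  by (auto simp: digraph_def)

lemma indep_sets_converse: "indep_sets V (E\<inverse>) = indep_sets V E"
proof -
  have "deg (E\<inverse>) = deg E"
    by (auto simp: deg_def fun_eq_iff)
  then show ?thesis
    by (auto simp: indep_sets_def Hstar_def maxdeg_def)
qed

lemma nbhd_converse: "nbhd V (E\<inverse>) S = nbhd V E S"
  by (auto simp: nbhd_def)

lemma edges_from_to_converse: "edges_from_to (E\<inverse>) A B = prod.swap ` edges_from_to E B A"
  by (auto simp: edges_from_to_def)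

lemma FS_edges_converse: "FS_edges V (E\<inverse>) S = prod.swap ` FS_edges V E S"
  by (auto simp: FS_edges_def edges_from_to_converse nbhd_converse)

lemma max_frac_matching_converse:
  "max_frac_matching V (E\<inverse>) S w \<longleftrightarrow> max_frac_matching V E S (w \<circ> prod.swap)"
proof -
  have "{e \<in> FS_edges V (E\<inverse>) S. fst e = v \<or> snd e = v}
        = prod.swap ` {e \<in> FS_edges V E S. fst e = v \<or> snd e = v}" for v
    by (auto simp: FS_edges_converse)
  then show ?thesis
    by (simp add: max_frac_matching_def FS_edges_converse nbhd_converse sum_swap_image)
qed

lemma max_frac_matchings_converse:
  "{w. max_frac_matching V (E\<inverse>) S w} = (\<lambda>w. w \<circ> prod.swap) ` {w. max_frac_matching V E S w}"
proof -
  have "w = (w \<circ> prod.swap) \<circ> prod.swap" for w :: "'a \<times> 'a \<Rightarrow> real"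
    by (simp add: fun_eq_iff)
  then show ?thesis
    by (auto simp: max_frac_matching_converse image_iff)
qed

lemma aS_converse: "aS V (E\<inverse>) S = bS V E S"
  unfolding aS_def bS_def max_frac_matchings_converse
  by (auto simp: edges_from_to_converse nbhd_converse sum_swap_image image_image comp_assoc)

lemma bS_converse: "bS V (E\<inverse>) S = aS V E S"
  unfolding aS_def bS_def max_frac_matchings_converse
  by (auto simp: edges_from_to_converse nbhd_converse sum_swap_image image_image comp_assoc)

lemma gH_converse: "gH V (E\<inverse>) x1 x2 y1 y2 = gH V E x2 x1 y2 y1"
  unfolding gH_def indep_sets_converse aS_converse bS_converse
  by (intro sum.cong) (auto simp: vplus_def vminus_def vpm_def min.commute conj_commute)

lemma G_feasible_converse:
  "G_feasible V (E\<inverse>) \<delta> x1 x2 y1 y2 \<longleftrightarrow> G_feasible V E \<delta> x2 x1 y2 y1"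
  by (auto simp: G_feasible_def gH_converse)

lemma GH_eq_Inf_y2_eq_1:
  assumes "digraph V E" and "0 \<le> \<delta>"
    and "\<forall>S\<in>indep_sets V E. 2 * bS V E S \<ge> real (card S)"
  shows "GH V E \<delta> = Inf {ereal (x1 * y1 + x2 * y2) | x1 x2 y1 y2.
                              G_feasible V E \<delta> x1 x2 y1 y2 \<and> y2 = 1}"
proof -
  have swap_values: "{ereal (x1 * y1 + x2 * y2) | x1 x2 y1 y2. G_feasible V (E\<inverse>) \<delta> x1 x2 y1 y2 \<and> P y1}
      = {ereal (x1 * y1 + x2 * y2) | x1 x2 y1 y2. G_feasible V E \<delta> x1 x2 y1 y2 \<and> P y2}" for P
    unfolding G_feasible_converse by auto (metis add.commute)+
  have "GH V (E\<inverse>) \<delta> = Inf {ereal (x1 * y1 + x2 * y2) | x1 x2 y1 y2.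
                              G_feasible V (E\<inverse>) \<delta> x1 x2 y1 y2 \<and> y1 = 1}"
    using assms by (intro GH_eq_Inf_y1_eq_1)
      (simp_all add: digraph_converse indep_sets_converse aS_converse)
  then show ?thesis
    using swap_values[of "\<lambda>_. True"] swap_values[of "\<lambda>y. y = 1"] by (simp add: GH_def)
qed

theorem proposition5p7:
  fixes V :: "'a set" and E :: "('a \<times> 'a) set" and \<delta> :: real
  assumes "digraph V E" and "\<delta> > 0"
  shows "((\<forall>S\<in>indep_sets V E. 2 * aS V E S \<ge> real (card S)) \<longrightarrow>
            GH V E \<delta> = Inf {ereal (x1 * y1 + x2 * y2) | x1 x2 y1 y2.
                              G_feasible V E \<delta> x1 x2 y1 y2 \<and> y1 = 1})
       \<and> ((\<forall>S\<in>indep_sets V E. 2 * bS V E S \<ge> real (card S)) \<longrightarrow>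
            GH V E \<delta> = Inf {ereal (x1 * y1 + x2 * y2) | x1 x2 y1 y2.
                              G_feasible V E \<delta> x1 x2 y1 y2 \<and> y2 = 1})"
  using GH_eq_Inf_y1_eq_1[OF assms(1)] GH_eq_Inf_y2_eq_1[OF assms(1)] assms(2) by simp

end
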